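(* For any natural number $n \geq 1$, $\{\omega^n, (\omega^n)^\star\} \leq_c \{\omega^{2n}, (\omega^{2n})^\star\}$.
   Context: Structures have domains contained in $\omega$. For countable structures $\mathcal{A},\mathcal{B}$, the class $\{\mathcal{A},\mathcal{B}\}$ denotes the class of all structures (with domain $\subseteq\omega$) isomorphic to $\mathcal{A}$ or to $\mathcal{B}$. Linear orders are in the language $\{<\}$; $L^\star$ is the reverse of a linear order $L$; $\omega^n$ denotes ordinal exponentiation (as an order type). An enumeration operator $\Gamma$ is a c.e. set of pairs $(\alpha,\varphi)$ with $\alpha$ a finite set of basic (atomic or negated atomic) sentences of the input language with constants from $\omega$ and $\varphi$ a basic sentence of the output language with constants from $\omega$; $\Gamma(X)=\{\varphi : (\alpha,\varphi)\in\Gamma,\ \alpha\subseteq X\}$. $\Gamma$ is a computable embedding of $\mathcal{K}_0$ into $\mathcal{K}_1$ ($\mathcal{K}_0\leq_c\mathcal{K}_1$) if for every $\mathcal{A}\in\mathcal{K}_0$, $\Gamma$ applied to the atomic diagram of $\mathcal{A}$ is the atomic diagram of a structure $\Gamma(\mathcal{A})\in\mathcal{K}_1$, and for all $\mathcal{A},\mathcal{B}\in\mathcal{K}_0$, $\mathcal{A}\cong\mathcal{B}$ iff $\Gamma(\mathcal{A})\cong\Gamma(\mathcal{B})$. *)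

theory Defs
  imports Main "HOL-Library.Nat_Bijection"
begin

datatype recf = Z | S | Id nat | Cn recf "recf list" | Pr recf recf | Mn recf

inductive eval :: "recf \<Rightarrow> nat list \<Rightarrow> nat \<Rightarrow> bool" where
  eval_Z: "eval Z xs 0"
| eval_S: "eval S (x # xs) (Suc x)"
| eval_Id: "i < length xs \<Longrightarrow> eval (Id i) xs (xs ! i)"
| eval_Cn: "length ys = length gs \<Longrightarrow> (\<forall>i < length gs. eval (gs ! i) xs (ys ! i))
            \<Longrightarrow> eval f ys z \<Longrightarrow> eval (Cn f gs) xs z"
| eval_Pr0: "eval f xs y \<Longrightarrow> eval (Pr f g) (0 # xs) y"
| eval_PrS: "eval (Pr f g) (n # xs) r \<Longrightarrow> eval g (r # n # xs) y
            \<Longrightarrow> eval (Pr f g) (Suc n # xs) y"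
| eval_Mn: "eval f (y # xs) 0 \<Longrightarrow> (\<forall>z < y. \<exists>v. v \<noteq> 0 \<and> eval f (z # xs) v)
            \<Longrightarrow> eval (Mn f) xs y"

definition ce :: "nat set \<Rightarrow> bool" where
  "ce A \<longleftrightarrow> (\<exists>f. A = {x. \<exists>y. eval f [x] y})"

datatype basic = Less nat nat | Eq nat nat | NLess nat nat | NEq nat nat

fun code_basic :: "basic \<Rightarrow> nat" where
  "code_basic (Less a b) = 4 * prod_encode (a, b)"
| "code_basic (Eq a b) = 4 * prod_encode (a, b) + 1"
| "code_basic (NLess a b) = 4 * prod_encode (a, b) + 2"
| "code_basic (NEq a b) = 4 * prod_encode (a, b) + 3"

text \<open>Structures: domain D \<subseteq> omega together with a binary relation (interpreting <).\<close>
type_synonym 'a struct = "'a set \<times> ('a \<Rightarrow> 'a \<Rightarrow> bool)"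

definition diag :: "nat struct \<Rightarrow> basic set" where
  "diag A = (case A of (D, R) \<Rightarrow>
      {Less a b | a b. a \<in> D \<and> b \<in> D \<and> R a b}
    \<union> {Eq a a | a. a \<in> D}
    \<union> {NLess a b | a b. a \<in> D \<and> b \<in> D \<and> \<not> R a b}
    \<union> {NEq a b | a b. a \<in> D \<and> b \<in> D \<and> a \<noteq> b})"

definition iso :: "'a struct \<Rightarrow> 'b struct \<Rightarrow> bool" where
  "iso A B = (case A of (D, R) \<Rightarrow> case B of (E, Q) \<Rightarrow>
      (\<exists>f. bij_betw f D E \<and> (\<forall>a\<in>D. \<forall>b\<in>D. R a b \<longleftrightarrow> Q (f a) (f b))))"

definition rev_order :: "'a struct \<Rightarrow> 'a struct" where
  "rev_order A = (case A of (D, R) \<Rightarrow> (D, \<lambda>a b. R b a))"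

text \<open>omega^n: length-n lists of naturals ordered lexicographically, the first
  coordinate being most significant (omega^(n+1) = omega^n * omega).\<close>
fun lex_less :: "nat list \<Rightarrow> nat list \<Rightarrow> bool" where
  "lex_less (x # xs) (y # ys) = (x < y \<or> (x = y \<and> lex_less xs ys))"
| "lex_less _ _ = False"

definition omega_pow :: "nat \<Rightarrow> nat list struct" where
  "omega_pow n = ({xs. length xs = n}, lex_less)"

definition pair_class :: "'a struct \<Rightarrow> 'b struct \<Rightarrow> nat struct set" where
  "pair_class A B = {C. iso C A \<or> iso C B}"

definition enum_operator :: "(basic set \<times> basic) set \<Rightarrow> bool" where
  "enum_operator \<Gamma> \<longleftrightarrow> (\<forall>(\<alpha>, \<phi>) \<in> \<Gamma>. finite \<alpha>) \<and>
     ce {prod_encode (set_encode (code_basic ` \<alpha>), code_basic \<phi>) | \<alpha> \<phi>. (\<alpha>, \<phi>) \<in> \<Gamma>}"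

definition enum_apply :: "(basic set \<times> basic) set \<Rightarrow> basic set \<Rightarrow> basic set" where
  "enum_apply \<Gamma> X = {\<phi>. \<exists>\<alpha>. (\<alpha>, \<phi>) \<in> \<Gamma> \<and> \<alpha> \<subseteq> X}"

definition comp_embedding :: "(basic set \<times> basic) set \<Rightarrow> nat struct set \<Rightarrow> nat struct set \<Rightarrow> bool" where
  "comp_embedding \<Gamma> K0 K1 \<longleftrightarrow> enum_operator \<Gamma> \<and>
     (\<forall>A \<in> K0. \<exists>B \<in> K1. enum_apply \<Gamma> (diag A) = diag B) \<and>
     (\<forall>A \<in> K0. \<forall>B \<in> K0. \<forall>A' B'. enum_apply \<Gamma> (diag A) = diag A' \<longrightarrow>
        enum_apply \<Gamma> (diag B) = diag B' \<longrightarrow> (iso A B \<longleftrightarrow> iso A' B'))"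

definition leq_c :: "nat struct set \<Rightarrow> nat struct set \<Rightarrow> bool" where
  "leq_c K0 K1 \<longleftrightarrow> (\<exists>\<Gamma>. comp_embedding \<Gamma> K0 K1)"

end

theory Submission
  imports Defs
begin

text \<open>The embedding sends the atomic diagram of a linear order \<open>L\<close> to that of its lexicographic
  square \<open>L \<times> L\<close>, the pair \<open>(a, b)\<close> being coded by \<open>prod_encode (a, b)\<close>. It is given by finitely
  many rule schemata in four parameters, such as \<open>{a < c, b = b} \<turnstile> \<langle>a,b\<rangle> < \<langle>c,b\<rangle>\<close>, so it is c.e.: a
  number is the code of a rule iff some parameter tuple below a search bound instantiates some
  schema to it, a primitive recursive test. As \<open>(\<omega>\<^sup>n)\<^sup>2 \<cong> \<omega>\<^sup>2\<^sup>n\<close> and \<open>(L\<^sup>*)\<^sup>2 = (L\<^sup>2)\<^sup>*\<close>, copies of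
  \<open>\<omega>\<^sup>n\<close> and \<open>(\<omega>\<^sup>n)\<^sup>*\<close> go to copies of \<open>\<omega>\<^sup>2\<^sup>n\<close> and \<open>(\<omega>\<^sup>2\<^sup>n)\<^sup>*\<close>, and isomorphism is preserved. It is
  also reflected, because \<open>\<omega>\<^sup>2\<^sup>n\<close> has a least element and its reverse does not.\<close>

section \<open>Total functions computed by recursive function terms\<close>

definition computes :: "recf \<Rightarrow> (nat list \<Rightarrow> nat) \<Rightarrow> nat \<Rightarrow> bool" where
  "computes f F k \<longleftrightarrow> (\<forall>xs. length xs = k \<longrightarrow> (\<forall>y. eval f xs y \<longleftrightarrow> y = F xs))"

lemma computesD: "computes f F k \<Longrightarrow> length xs = k \<Longrightarrow> eval f xs y \<longleftrightarrow> y = F xs"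
  unfolding computes_def by blast

lemma computes_cong:
  "computes f F k \<Longrightarrow> (\<And>xs. length xs = k \<Longrightarrow> F xs = G xs) \<Longrightarrow> computes f G k"
  unfolding computes_def by metis

lemma computes_Z: "computes Z (\<lambda>_. 0) k"
  unfolding computes_def by (auto intro: eval_Z elim: eval.cases)

lemma computes_S: "computes S (\<lambda>xs. Suc (xs ! 0)) 1"
  unfolding computes_def by (auto simp: length_Suc_conv intro: eval_S elim: eval.cases)

lemma computes_Id: "i < k \<Longrightarrow> computes (Id i) (\<lambda>xs. xs ! i) k"
  unfolding computes_def by (auto intro: eval_Id elim: eval.cases)

lemma computes_Cn:
  assumes f: "computes f F (length gs)" and len: "length Gs = length gs"
    and gs: "\<And>i. i < length gs \<Longrightarrow> computes (gs ! i) (Gs ! i) k"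
  shows "computes (Cn f gs) (\<lambda>xs. F (map (\<lambda>G. G xs) Gs)) k"
  unfolding computes_def
proof (intro allI impI iffI)
  fix xs :: "nat list" and y
  assume xs: "length xs = k"
  have args: "ys = map (\<lambda>G. G xs) Gs"
    if "length ys = length gs" "\<forall>i < length gs. eval (gs ! i) xs (ys ! i)" for ys
    using that len computesD[OF gs xs] by (auto intro: nth_equalityI)
  show "y = F (map (\<lambda>G. G xs) Gs)" if "eval (Cn f gs) xs y"
    using that args computesD[OF f] by (auto elim: eval.cases)
  show "eval (Cn f gs) xs y" if "y = F (map (\<lambda>G. G xs) Gs)"
    using that len computesD[OF gs xs] computesD[OF f]
    by (intro eval_Cn[where ys = "map (\<lambda>G. G xs) Gs"]) auto
qed

lemma computes_Cn1:
  "computes f F 1 \<Longrightarrow> computes g G k \<Longrightarrow> computes (Cn f [g]) (\<lambda>xs. F [G xs]) k"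
  using computes_Cn[of f F "[g]" "[G]" k] by simp

lemma computes_Cn2:
  assumes "computes f F 2" and "computes g G k" and "computes h H k"
  shows "computes (Cn f [g, h]) (\<lambda>xs. F [G xs, H xs]) k"
proof -
  have "\<And>i. i < length [g, h] \<Longrightarrow> computes ([g, h] ! i) ([G, H] ! i) k"
    using assms by (auto simp: less_Suc_eq)
  then show ?thesis
    using computes_Cn[of f F "[g, h]" "[G, H]" k] assms(1) by (simp add: numeral_2_eq_2)
qed

lemma computes_Pr:
  assumes f: "computes f F k" and g: "computes g G (Suc (Suc k))"
    and H0: "\<And>xs. length xs = k \<Longrightarrow> H (0 # xs) = F xs"
    and HSuc: "\<And>n xs. length xs = k \<Longrightarrow> H (Suc n # xs) = G (H (n # xs) # n # xs)"
  shows "computes (Pr f g) H (Suc k)"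
  unfolding computes_def
proof (rule allI, rule impI)
  fix xs :: "nat list"
  assume "length xs = Suc k"
  then obtain n ys where xs: "xs = n # ys" and ys: "length ys = k"
    by (cases xs) auto
  have "\<forall>y. eval (Pr f g) (n # ys) y \<longleftrightarrow> y = H (n # ys)"
  proof (induction n)
    case 0
    show ?case
      using computesD[OF f ys] H0[OF ys] by (auto intro: eval_Pr0 elim: eval.cases)
  next
    case (Suc n)
    then show ?case
      using computesD[OF g] ys HSuc[OF ys] by (auto intro: eval_PrS elim: eval.cases)
  qed
  then show "\<forall>y. eval (Pr f g) xs y \<longleftrightarrow> y = H xs"
    using xs by simp
qed

lemma eval_Mn_iff:
  assumes "computes f F (Suc (length xs))"
  shows "eval (Mn f) xs y \<longleftrightarrow> F (y # xs) = 0 \<and> (\<forall>z<y. F (z # xs) \<noteq> 0)"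
  using computesD[OF assms] by (auto intro!: eval_Mn elim: eval.cases)

definition rec_add :: recf where "rec_add = Pr (Id 0) (Cn S [Id 0])"
definition rec_mult :: recf where "rec_mult = Pr Z (Cn rec_add [Id 0, Id 2])"
definition rec_pow2 :: recf where "rec_pow2 = Pr (Cn S [Z]) (Cn rec_add [Id 0, Id 0])"
definition rec_dec :: recf where "rec_dec = Pr Z (Id 1)"
definition rec_diff :: recf where "rec_diff = Pr (Id 0) (Cn rec_dec [Id 0])"
definition rec_is_zero :: recf where "rec_is_zero = Pr (Cn S [Z]) Z"
definition rec_eq :: recf where
  "rec_eq = Cn rec_is_zero [Cn rec_add [Cn rec_diff [Id 0, Id 1], Cn rec_diff [Id 1, Id 0]]]"

lemma computes_rec_add: "computes rec_add (\<lambda>xs. xs ! 0 + xs ! 1) 2"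
  unfolding rec_add_def numeral_2_eq_2
  by (rule computes_Pr[OF computes_Id computes_Cn1[OF computes_S computes_Id]]) auto

lemma computes_rec_mult: "computes rec_mult (\<lambda>xs. xs ! 0 * xs ! 1) 2"
  unfolding rec_mult_def numeral_2_eq_2
  by (rule computes_Pr[OF computes_Z computes_Cn2[OF computes_rec_add computes_Id computes_Id]])
    auto

lemma computes_rec_pow2: "computes rec_pow2 (\<lambda>xs. 2 ^ (xs ! 0)) 1"
  unfolding rec_pow2_def One_nat_def
  by (rule computes_Pr[OF computes_Cn1[OF computes_S computes_Z]
        computes_Cn2[OF computes_rec_add computes_Id computes_Id]]) auto

lemma computes_rec_dec: "computes rec_dec (\<lambda>xs. xs ! 0 - 1) 1"
  unfolding rec_dec_def One_nat_def by (rule computes_Pr[OF computes_Z computes_Id]) auto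

lemma computes_rec_diff: "computes rec_diff (\<lambda>xs. xs ! 1 - xs ! 0) 2"
  unfolding rec_diff_def numeral_2_eq_2
  by (rule computes_Pr[OF computes_Id computes_Cn1[OF computes_rec_dec computes_Id]]) auto

lemma computes_rec_is_zero: "computes rec_is_zero (\<lambda>xs. if xs ! 0 = 0 then 1 else 0) 1"
  unfolding rec_is_zero_def One_nat_def
  by (rule computes_Pr[OF computes_Cn1[OF computes_S computes_Z] computes_Z]) auto

lemma computes_rec_eq: "computes rec_eq (\<lambda>xs. if xs ! 0 = xs ! 1 then 1 else 0) 2"
  unfolding rec_eq_def
  by (rule computes_cong[OF computes_Cn1[OF computes_rec_is_zero
        computes_Cn2[OF computes_rec_add computes_Cn2[OF computes_rec_diff computes_Id computes_Id]
          computes_Cn2[OF computes_rec_diff computes_Id computes_Id]]]]) auto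

section \<open>An expression language for primitive recursive functions\<close>

datatype pexp = Var nat | Zero | Succ pexp | Add pexp pexp | Mult pexp pexp | Pow2 pexp
  | Ind_eq pexp pexp | Bsum pexp pexp

text \<open>In \<open>Bsum m e\<close> the summation index is bound as variable 0 of \<open>e\<close>, shifting the others.\<close>
fun pval :: "pexp \<Rightarrow> nat list \<Rightarrow> nat" where
  "pval (Var i) xs = xs ! i"
| "pval Zero xs = 0"
| "pval (Succ e) xs = Suc (pval e xs)"
| "pval (Add a b) xs = pval a xs + pval b xs"
| "pval (Mult a b) xs = pval a xs * pval b xs"
| "pval (Pow2 a) xs = 2 ^ pval a xs"
| "pval (Ind_eq a b) xs = (if pval a xs = pval b xs then 1 else 0)"
| "pval (Bsum m e) xs = (\<Sum>j < pval m xs. pval e (j # xs))"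

fun pexp_wf :: "nat \<Rightarrow> pexp \<Rightarrow> bool" where
  "pexp_wf k (Var i) = (i < k)"
| "pexp_wf k Zero = True"
| "pexp_wf k (Succ e) = pexp_wf k e"
| "pexp_wf k (Add a b) = (pexp_wf k a \<and> pexp_wf k b)"
| "pexp_wf k (Mult a b) = (pexp_wf k a \<and> pexp_wf k b)"
| "pexp_wf k (Pow2 a) = pexp_wf k a"
| "pexp_wf k (Ind_eq a b) = (pexp_wf k a \<and> pexp_wf k b)"
| "pexp_wf k (Bsum m e) = (pexp_wf k m \<and> pexp_wf (Suc k) e)"

fun pexp_recf :: "nat \<Rightarrow> pexp \<Rightarrow> recf" where
  "pexp_recf k (Var i) = Id i"
| "pexp_recf k Zero = Z"
| "pexp_recf k (Succ e) = Cn S [pexp_recf k e]"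
| "pexp_recf k (Add a b) = Cn rec_add [pexp_recf k a, pexp_recf k b]"
| "pexp_recf k (Mult a b) = Cn rec_mult [pexp_recf k a, pexp_recf k b]"
| "pexp_recf k (Pow2 a) = Cn rec_pow2 [pexp_recf k a]"
| "pexp_recf k (Ind_eq a b) = Cn rec_eq [pexp_recf k a, pexp_recf k b]"
| "pexp_recf k (Bsum m e) =
     Cn (Pr Z (Cn rec_add [Id 0, Cn (pexp_recf (Suc k) e) (map Id [1..<Suc (Suc k)])]))
       (pexp_recf k m # map Id [0..<k])"

lemma computes_Cn_cons_args:
  assumes "computes f F (Suc k)" and "computes g G k"
  shows "computes (Cn f (g # map Id [0..<k])) (\<lambda>xs. F (G xs # xs)) k"
proof (rule computes_cong)
  show "computes (Cn f (g # map Id [0..<k]))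
      (\<lambda>xs. F (map (\<lambda>G. G xs) (G # map (\<lambda>i xs. xs ! i) [0..<k]))) k"
    using assms by (intro computes_Cn) (auto simp: nth_Cons' intro!: computes_Id)
  show "F (map (\<lambda>G. G xs) (G # map (\<lambda>i xs. xs ! i) [0..<k])) = F (G xs # xs)"
    if "length xs = k" for xs
    using that map_nth[of xs] by (simp add: comp_def)
qed

lemma computes_Cn_tl_args:
  assumes "computes f F (Suc k)"
  shows "computes (Cn f (map Id [1..<Suc (Suc k)])) (\<lambda>xs. F (tl xs)) (Suc (Suc k))"
proof (rule computes_cong)
  show "computes (Cn f (map Id [1..<Suc (Suc k)]))
      (\<lambda>xs. F (map (\<lambda>G. G xs) (map (\<lambda>i xs. xs ! i) [1..<Suc (Suc k)]))) (Suc (Suc k))"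
    using assms by (intro computes_Cn) (auto simp del: upt_Suc intro!: computes_Id)
  have "map (\<lambda>i. xs ! i) [1..<Suc (Suc k)] = tl xs"
    if "length xs = Suc (Suc k)" for xs :: "nat list"
    using that by (intro nth_equalityI) (auto simp: nth_tl simp del: upt_Suc)
  then show "F (map (\<lambda>G. G xs) (map (\<lambda>i xs. xs ! i) [1..<Suc (Suc k)])) = F (tl xs)"
    if "length xs = Suc (Suc k)" for xs
    using that by (simp del: upt_Suc add: comp_def)
qed

lemma computes_pexp_recf: "pexp_wf k e \<Longrightarrow> computes (pexp_recf k e) (pval e) k"
proof (induction e arbitrary: k)
  case (Bsum m e)
  have e: "computes (pexp_recf (Suc k) e) (pval e) (Suc k)"
    and m: "computes (pexp_recf k m) (pval m) k"
    using Bsum by auto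
  have "computes (Cn rec_add [Id 0, Cn (pexp_recf (Suc k) e) (map Id [1..<Suc (Suc k)])])
      (\<lambda>zs. zs ! 0 + pval e (tl zs)) (Suc (Suc k))"
    using computes_Cn2[OF computes_rec_add computes_Id computes_Cn_tl_args[OF e]] by simp
  then have "computes
      (Pr Z (Cn rec_add [Id 0, Cn (pexp_recf (Suc k) e) (map Id [1..<Suc (Suc k)])]))
      (\<lambda>xs. \<Sum>j < hd xs. pval e (j # tl xs)) (Suc k)"
    by (rule computes_Pr[OF computes_Z]) auto
  from computes_Cn_cons_args[OF this m]
  have "computes (pexp_recf k (Bsum m e)) (\<lambda>xs. \<Sum>j < pval m xs. pval e (j # xs)) k"
    by (simp del: upt_Suc)
  moreover have "pval (Bsum m e) = (\<lambda>xs. \<Sum>j < pval m xs. pval e (j # xs))"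
    by (simp add: fun_eq_iff)
  ultimately show ?case
    by simp
qed (auto intro!: computes_cong[OF computes_Id] computes_cong[OF computes_Z]
      computes_cong[OF computes_Cn1[OF computes_S]]
      computes_cong[OF computes_Cn1[OF computes_rec_pow2]]
      computes_cong[OF computes_Cn2[OF computes_rec_add]]
      computes_cong[OF computes_Cn2[OF computes_rec_mult]]
      computes_cong[OF computes_Cn2[OF computes_rec_eq]])

lemma ce_pexp_search:
  assumes "pexp_wf 2 e"
  shows "ce {x. \<exists>y. pval e [y, x] \<noteq> 0}"
proof -
  let ?f = "Mn (Cn rec_is_zero [pexp_recf 2 e])"
  have mu_arg: "computes (Cn rec_is_zero [pexp_recf 2 e]) (\<lambda>xs. if pval e xs = 0 then 1 else 0)
      (Suc (length [x]))" for x :: nat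
    using computes_Cn1[OF computes_rec_is_zero computes_pexp_recf[OF assms]]
    by (simp add: numeral_2_eq_2)
  have "eval ?f [x] y \<longleftrightarrow> pval e [y, x] \<noteq> 0 \<and> (\<forall>z<y. pval e [z, x] = 0)" for x y
    using eval_Mn_iff[OF mu_arg] by auto
  then have "(\<exists>y. eval ?f [x] y) \<longleftrightarrow> (\<exists>y. pval e [y, x] \<noteq> 0)" for x
    using exists_least_iff[of "\<lambda>y. pval e [y, x] \<noteq> 0"] by auto
  then show ?thesis
    unfolding ce_def by blast
qed

definition pair_pexp :: "pexp \<Rightarrow> pexp \<Rightarrow> pexp" where
  "pair_pexp a b = Add (Bsum (Succ (Add a b)) (Var 0)) a"

definition num_pexp :: "nat \<Rightarrow> pexp" where
  "num_pexp k = (Succ ^^ k) Zero"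

definition sum_pexp :: "pexp list \<Rightarrow> pexp" where
  "sum_pexp es = foldr Add es Zero"

lemma pval_pair_pexp: "pval (pair_pexp a b) xs = prod_encode (pval a xs, pval b xs)"
proof -
  have "(\<Sum>j<Suc n. j) = triangle n" for n
    by (induction n) auto
  then show ?thesis
    by (simp add: pair_pexp_def prod_encode_def del: sum.lessThan_Suc)
qed

lemma pval_num_pexp: "pval (num_pexp k) xs = k"
  unfolding num_pexp_def by (induction k) auto

lemma pval_sum_pexp: "pval (sum_pexp es) xs = (\<Sum>e\<leftarrow>es. pval e xs)"
  unfolding sum_pexp_def by (induction es) auto

lemma pexp_wf_pair_pexp: "pexp_wf k a \<Longrightarrow> pexp_wf k b \<Longrightarrow> pexp_wf k (pair_pexp a b)"
  by (simp add: pair_pexp_def)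

lemma pexp_wf_num_pexp: "pexp_wf k (num_pexp n)"
  unfolding num_pexp_def by (induction n) auto

lemma pexp_wf_sum_pexp: "(\<And>e. e \<in> set es \<Longrightarrow> pexp_wf k e) \<Longrightarrow> pexp_wf k (sum_pexp es)"
  unfolding sum_pexp_def by (induction es) auto

section \<open>Enumeration operators given by finitely many rule templates\<close>

datatype tterm = Param nat | Paired nat nat

datatype tsent = TLess tterm tterm | TEq tterm tterm | TNLess tterm tterm | TNEq tterm tterm

type_synonym rule_template = "tsent list \<times> tsent"

fun inst_term :: "nat list \<Rightarrow> tterm \<Rightarrow> nat" where
  "inst_term ps (Param i) = ps ! i"
| "inst_term ps (Paired i j) = prod_encode (ps ! i, ps ! j)"

fun inst_sent :: "nat list \<Rightarrow> tsent \<Rightarrow> basic" where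
  "inst_sent ps (TLess t u) = Less (inst_term ps t) (inst_term ps u)"
| "inst_sent ps (TEq t u) = Eq (inst_term ps t) (inst_term ps u)"
| "inst_sent ps (TNLess t u) = NLess (inst_term ps t) (inst_term ps u)"
| "inst_sent ps (TNEq t u) = NEq (inst_term ps t) (inst_term ps u)"

definition inst_rule :: "nat list \<Rightarrow> rule_template \<Rightarrow> basic set \<times> basic" where
  "inst_rule ps r = (inst_sent ps ` set (fst r), inst_sent ps (snd r))"

definition template_operator :: "rule_template list \<Rightarrow> (basic set \<times> basic) set" where
  "template_operator rs = {inst_rule ps r | ps r. length ps = 4 \<and> r \<in> set rs}"

fun sent_kind :: "tsent \<Rightarrow> nat" where
  "sent_kind (TLess _ _) = 0"
| "sent_kind (TEq _ _) = 1"
| "sent_kind (TNLess _ _) = 2"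
| "sent_kind (TNEq _ _) = 3"

fun sent_args :: "tsent \<Rightarrow> tterm \<times> tterm" where
  "sent_args (TLess t u) = (t, u)"
| "sent_args (TEq t u) = (t, u)"
| "sent_args (TNLess t u) = (t, u)"
| "sent_args (TNEq t u) = (t, u)"

fun tterm_wf :: "tterm \<Rightarrow> bool" where
  "tterm_wf (Param i) = (i < 4)"
| "tterm_wf (Paired i j) = (i < 4 \<and> j < 4)"

definition tsent_wf :: "tsent \<Rightarrow> bool" where
  "tsent_wf s = (tterm_wf (fst (sent_args s)) \<and> tterm_wf (snd (sent_args s)))"

text \<open>Premises of distinct kinds have distinct codes, so the code of the premise set is a
  plain sum of powers of two.\<close>
definition template_wf :: "rule_template \<Rightarrow> bool" where
  "template_wf r \<longleftrightarrow>
     (\<forall>s\<in>set (fst r). tsent_wf s) \<and> tsent_wf (snd r) \<and> distinct (map sent_kind (fst r))"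

definition code_rule :: "basic set \<times> basic \<Rightarrow> nat" where
  "code_rule r = prod_encode (set_encode (code_basic ` fst r), code_basic (snd r))"

lemma code_inst_sent:
  "code_basic (inst_sent ps s) =
     4 * prod_encode (inst_term ps (fst (sent_args s)), inst_term ps (snd (sent_args s)))
       + sent_kind s"
  by (cases s) simp_all

lemma inst_rule_append:
  assumes "template_wf r" and "length ps = 4"
  shows "inst_rule (ps @ qs) r = inst_rule ps r"
proof -
  have "inst_term (ps @ qs) t = inst_term ps t" if "tterm_wf t" for t
    using that assms(2) by (cases t) (auto simp: nth_append)
  then have "inst_sent (ps @ qs) s = inst_sent ps s" if "tsent_wf s" for s
    using that by (cases s) (auto simp: tsent_wf_def)
  then show ?thesis
    using assms(1) by (auto simp: inst_rule_def template_wf_def)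
qed

fun term_pexp :: "tterm \<Rightarrow> pexp" where
  "term_pexp (Param i) = Var i"
| "term_pexp (Paired i j) = pair_pexp (Var i) (Var j)"

definition sent_pexp :: "tsent \<Rightarrow> pexp" where
  "sent_pexp s =
     Add (Mult (num_pexp 4) (pair_pexp (term_pexp (fst (sent_args s))) (term_pexp (snd (sent_args s)))))
       (num_pexp (sent_kind s))"

definition rule_pexp :: "rule_template \<Rightarrow> pexp" where
  "rule_pexp r = pair_pexp (sum_pexp (map (\<lambda>s. Pow2 (sent_pexp s)) (fst r))) (sent_pexp (snd r))"

lemma pval_sent_pexp: "pval (sent_pexp s) ps = code_basic (inst_sent ps s)"
proof -
  have "pval (term_pexp t) ps = inst_term ps t" for t
    by (cases t) (simp_all add: pval_pair_pexp)
  then show ?thesis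
    by (simp add: sent_pexp_def code_inst_sent pval_pair_pexp pval_num_pexp)
qed

lemma pval_rule_pexp:
  assumes "template_wf r"
  shows "pval (rule_pexp r) ps = code_rule (inst_rule ps r)"
proof -
  obtain \<alpha> \<phi> where r: "r = (\<alpha>, \<phi>)"
    by (cases r)
  have "code_basic (inst_sent ps s) mod 4 = sent_kind s" for s
    unfolding code_inst_sent by (cases s) (simp_all add: mod_Suc)
  moreover have "inj_on sent_kind (set \<alpha>)" and "distinct \<alpha>"
    using assms r by (auto simp: template_wf_def dest: distinct_map[THEN iffD1])
  ultimately have "inj_on (\<lambda>s. code_basic (inst_sent ps s)) (set \<alpha>)"
    unfolding inj_on_def by metis
  then have "set_encode (code_basic ` inst_sent ps ` set \<alpha>) =
      (\<Sum>s\<leftarrow>\<alpha>. 2 ^ code_basic (inst_sent ps s))"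
    using \<open>distinct \<alpha>\<close>
    by (simp add: set_encode_def image_image sum.reindex sum_list_distinct_conv_sum_set)
  then show ?thesis
    by (simp add: r rule_pexp_def code_rule_def inst_rule_def pval_pair_pexp pval_sum_pexp
        pval_sent_pexp comp_def)
qed

lemma pexp_wf_rule_pexp:
  assumes "template_wf r" and "4 \<le> k"
  shows "pexp_wf k (rule_pexp r)"
proof -
  have "pexp_wf k (term_pexp t)" if "tterm_wf t" for t
    using that assms(2) by (cases t) (auto intro: pexp_wf_pair_pexp)
  then have "pexp_wf k (sent_pexp s)" if "tsent_wf s" for s
    using that by (simp add: sent_pexp_def tsent_wf_def pexp_wf_pair_pexp pexp_wf_num_pexp)
  then show ?thesis
    using assms(1)
    by (auto simp: rule_pexp_def template_wf_def intro!: pexp_wf_pair_pexp pexp_wf_sum_pexp)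
qed

text \<open>Below the four sums the parameters are variables 0 to 3 (in reverse order), the bound
  \<open>y\<close> is variable 4 and the candidate code \<open>x\<close> is variable 5.\<close>
definition template_search :: "rule_template list \<Rightarrow> pexp" where
  "template_search rs =
     Bsum (Succ (Var 0)) (Bsum (Succ (Var 1)) (Bsum (Succ (Var 2)) (Bsum (Succ (Var 3))
       (sum_pexp (map (\<lambda>r. Ind_eq (Var 5) (rule_pexp r)) rs)))))"

lemma sum_list_indicator_eq_0:
  "(\<Sum>x\<leftarrow>xs. if P x then 1 else 0 :: nat) = 0 \<longleftrightarrow> (\<forall>x\<in>set xs. \<not> P x)"
  by (induction xs) auto

lemma pval_template_search:
  assumes "\<forall>r\<in>set rs. template_wf r"
  shows "pval (template_search rs) [y, x] \<noteq> 0 \<longleftrightarrow>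
    (\<exists>a\<le>y. \<exists>b\<le>y. \<exists>c\<le>y. \<exists>d\<le>y. \<exists>r\<in>set rs. x = code_rule (inst_rule [d, c, b, a] r))"
proof -
  have "pval (rule_pexp r) [d, c, b, a, y, x] = code_rule (inst_rule [d, c, b, a] r)"
    if "r \<in> set rs" for a b c d r
    using assms that pval_rule_pexp inst_rule_append[of r "[d, c, b, a]" "[y, x]"] by simp
  then have "pval (template_search rs) [y, x] =
      (\<Sum>a\<le>y. \<Sum>b\<le>y. \<Sum>c\<le>y. \<Sum>d\<le>y. \<Sum>r\<leftarrow>rs. if x = code_rule (inst_rule [d, c, b, a] r) then 1 else 0)"
    by (simp add: template_search_def pval_sum_pexp lessThan_Suc_atMost cong: map_cong
        del: sum.lessThan_Suc)
  then show ?thesis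
    by (simp add: sum_list_indicator_eq_0 Bex_def del: sum_list_eq_0_iff)
qed

lemma length_4_conv: "length ps = 4 \<longleftrightarrow> (\<exists>a b c d. ps = [a, b, c, d])"
  by (auto simp: numeral_eq_Suc length_Suc_conv)

lemma enum_operator_template_operator:
  assumes "\<forall>r\<in>set rs. template_wf r"
  shows "enum_operator (template_operator rs)"
proof -
  have codes: "{code_rule \<gamma> | \<gamma>. \<gamma> \<in> template_operator rs} =
      {x. \<exists>y. pval (template_search rs) [y, x] \<noteq> 0}"
  proof (intro set_eqI iffI)
    fix x
    assume "x \<in> {code_rule \<gamma> | \<gamma>. \<gamma> \<in> template_operator rs}"
    then obtain a b c d r where "r \<in> set rs" and "x = code_rule (inst_rule [d, c, b, a] r)"
      by (auto simp: template_operator_def length_4_conv)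
    moreover have "a \<le> a + b + c + d \<and> b \<le> a + b + c + d \<and> c \<le> a + b + c + d \<and> d \<le> a + b + c + d"
      by simp
    ultimately have "pval (template_search rs) [a + b + c + d, x] \<noteq> 0"
      unfolding pval_template_search[OF assms] by blast
    then show "x \<in> {x. \<exists>y. pval (template_search rs) [y, x] \<noteq> 0}"
      by blast
  next
    fix x
    assume "x \<in> {x. \<exists>y. pval (template_search rs) [y, x] \<noteq> 0}"
    then obtain a b c d r where "r \<in> set rs" and x: "x = code_rule (inst_rule [d, c, b, a] r)"
      unfolding pval_template_search[OF assms] by blast
    then have "inst_rule [d, c, b, a] r \<in> template_operator rs"
      unfolding template_operator_def by (intro CollectI exI[of _ "[d, c, b, a]"] exI[of _ r]) simp
    then show "x \<in> {code_rule \<gamma> | \<gamma>. \<gamma> \<in> template_operator rs}"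
      using x by blast
  qed
  have "pexp_wf 2 (template_search rs)"
    using assms by (auto simp: template_search_def intro!: pexp_wf_sum_pexp pexp_wf_rule_pexp)
  then have "ce {code_rule \<gamma> | \<gamma>. \<gamma> \<in> template_operator rs}"
    unfolding codes by (rule ce_pexp_search)
  then show ?thesis
    by (auto simp: enum_operator_def template_operator_def inst_rule_def code_rule_def)
qed

lemma enum_apply_template_operator:
  "\<phi> \<in> enum_apply (template_operator rs) X \<longleftrightarrow>
     (\<exists>r\<in>set rs. \<exists>a b c d.
        inst_sent [a, b, c, d] ` set (fst r) \<subseteq> X \<and> \<phi> = inst_sent [a, b, c, d] (snd r))"
  (is "_ \<longleftrightarrow> (\<exists>r\<in>set rs. \<exists>a b c d. ?derived r [a, b, c, d])")
proof
  assume "\<phi> \<in> enum_apply (template_operator rs) X"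
  then obtain \<alpha> ps r where "length ps = 4" "r \<in> set rs" "(\<alpha>, \<phi>) = inst_rule ps r" "\<alpha> \<subseteq> X"
    unfolding enum_apply_def template_operator_def by blast
  moreover from \<open>length ps = 4\<close> obtain a b c d where "ps = [a, b, c, d]"
    unfolding length_4_conv by blast
  ultimately show "\<exists>r\<in>set rs. \<exists>a b c d. ?derived r [a, b, c, d]"
    unfolding inst_rule_def by auto blast
next
  assume "\<exists>r\<in>set rs. \<exists>a b c d. ?derived r [a, b, c, d]"
  then obtain r a b c d where "r \<in> set rs" and derived: "?derived r [a, b, c, d]"
    by blast
  then have "inst_rule [a, b, c, d] r \<in> template_operator rs"
    unfolding template_operator_def by (intro CollectI exI[of _ "[a, b, c, d]"] exI[of _ r]) simp
  with derived show "\<phi> \<in> enum_apply (template_operator rs) X"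
    unfolding enum_apply_def inst_rule_def by force
qed

section \<open>Isomorphisms of structures and lexicographic products\<close>

lemma iso_iff:
  "iso A B \<longleftrightarrow>
     (\<exists>f. bij_betw f (fst A) (fst B) \<and> (\<forall>a\<in>fst A. \<forall>b\<in>fst A. snd A a b \<longleftrightarrow> snd B (f a) (f b)))"
  by (cases A; cases B) (simp add: iso_def)

lemma iso_sym: "iso A B \<Longrightarrow> iso B A"
proof -
  assume "iso A B"
  then obtain f where f: "bij_betw f (fst A) (fst B)"
    and hom: "\<forall>a\<in>fst A. \<forall>b\<in>fst A. snd A a b \<longleftrightarrow> snd B (f a) (f b)"
    unfolding iso_iff by blast
  have "\<forall>a\<in>fst B. \<forall>b\<in>fst B. snd B a b \<longleftrightarrow> snd A (inv_into (fst A) f a) (inv_into (fst A) f b)"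
    using hom f by (simp add: bij_betw_def inv_into_into f_inv_into_f)
  with bij_betw_inv_into[OF f] show "iso B A"
    unfolding iso_iff by blast
qed

lemma iso_trans:
  assumes "iso A B" and "iso B C"
  shows "iso A C"
proof -
  obtain f where f: "bij_betw f (fst A) (fst B)"
    and hom_f: "\<forall>a\<in>fst A. \<forall>b\<in>fst A. snd A a b \<longleftrightarrow> snd B (f a) (f b)"
    using assms(1) unfolding iso_iff by blast
  obtain g where g: "bij_betw g (fst B) (fst C)"
    and hom_g: "\<forall>a\<in>fst B. \<forall>b\<in>fst B. snd B a b \<longleftrightarrow> snd C (g a) (g b)"
    using assms(2) unfolding iso_iff by blast
  have "f a \<in> fst B" if "a \<in> fst A" for a
    using f that by (meson bij_betwE)
  then have "\<forall>a\<in>fst A. \<forall>b\<in>fst A. snd A a b \<longleftrightarrow> snd C ((g \<circ> f) a) ((g \<circ> f) b)"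
    using hom_f hom_g by simp
  with bij_betw_trans[OF f g] show ?thesis
    unfolding iso_iff by blast
qed

lemma iso_rev_order: "iso A B \<Longrightarrow> iso (rev_order A) (rev_order B)"
  by (cases A; cases B) (auto simp: iso_def rev_order_def)

lemma diag_iff:
  shows "Less a b \<in> diag A \<longleftrightarrow> a \<in> fst A \<and> b \<in> fst A \<and> snd A a b"
    and "Eq a b \<in> diag A \<longleftrightarrow> a \<in> fst A \<and> a = b"
    and "NLess a b \<in> diag A \<longleftrightarrow> a \<in> fst A \<and> b \<in> fst A \<and> \<not> snd A a b"
    and "NEq a b \<in> diag A \<longleftrightarrow> a \<in> fst A \<and> b \<in> fst A \<and> a \<noteq> b"
  by (cases A; auto simp: diag_def)+

lemma diag_eq_imp_iso:
  assumes "diag A = diag B"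
  shows "iso A B"
proof -
  have carrier: "fst A = fst B"
    using assms diag_iff(2) by blast
  have "\<forall>a\<in>fst A. \<forall>b\<in>fst A. snd A a b \<longleftrightarrow> snd B a b"
    using assms diag_iff(1) carrier by blast
  then show ?thesis
    unfolding iso_iff carrier by (intro exI[of _ id]) simp
qed

definition strict_linear :: "'a struct \<Rightarrow> bool" where
  "strict_linear A \<longleftrightarrow>
     irreflp_on (fst A) (snd A) \<and> transp_on (fst A) (snd A) \<and> totalp_on (fst A) (snd A)"

lemma strict_linear_iso:
  assumes "iso A B" and "strict_linear B"
  shows "strict_linear A"
proof -
  obtain f where f: "bij_betw f (fst A) (fst B)"
    and hom: "\<And>a b. a \<in> fst A \<Longrightarrow> b \<in> fst A \<Longrightarrow> snd A a b \<longleftrightarrow> snd B (f a) (f b)"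
    using assms(1) unfolding iso_iff by blast
  have f_into: "f a \<in> fst B" if "a \<in> fst A" for a
    using f that by (meson bij_betwE)
  have irr: "irreflp_on (fst B) (snd B)" and tr: "transp_on (fst B) (snd B)"
    and tot: "totalp_on (fst B) (snd B)"
    using assms(2) by (simp_all add: strict_linear_def)
  have "irreflp_on (fst A) (snd A)"
    by (rule irreflp_onI) (use irr hom f_into in \<open>auto dest: irreflp_onD\<close>)
  moreover have "transp_on (fst A) (snd A)"
  proof (rule transp_onI)
    fix a b c
    assume "a \<in> fst A" "b \<in> fst A" "c \<in> fst A" "snd A a b" "snd A b c"
    with hom f_into show "snd A a c"
      by (meson transp_onD[OF tr])
  qed
  moreover have "totalp_on (fst A) (snd A)"
  proof (rule totalp_onI)
    fix a b
    assume "a \<in> fst A" "b \<in> fst A" "a \<noteq> b"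
    moreover from this f have "f a \<noteq> f b"
      by (auto simp: bij_betw_def inj_on_def)
    ultimately show "snd A a b \<or> snd A b a"
      using hom f_into totalp_onD[OF tot] by metis
  qed
  ultimately show ?thesis
    by (simp add: strict_linear_def)
qed

lemma rev_order_conversep: "rev_order A = (fst A, (snd A)\<inverse>\<inverse>)"
  by (cases A) (auto simp: rev_order_def fun_eq_iff)

lemma strict_linear_rev_order: "strict_linear (rev_order A) \<longleftrightarrow> strict_linear A"
  by (simp add: strict_linear_def rev_order_conversep)

definition lex_prod :: "'a struct \<Rightarrow> 'b struct \<Rightarrow> ('a \<times> 'b) struct" where
  "lex_prod A B =
     (fst A \<times> fst B, \<lambda>x y. snd A (fst x) (fst y) \<or> fst x = fst y \<and> snd B (snd x) (snd y))"

lemma iso_lex_prod: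
  assumes "iso A A'" and "iso B B'"
  shows "iso (lex_prod A B) (lex_prod A' B')"
proof -
  obtain f where f: "bij_betw f (fst A) (fst A')"
    and hom_f: "\<forall>a\<in>fst A. \<forall>b\<in>fst A. snd A a b \<longleftrightarrow> snd A' (f a) (f b)"
    using assms(1) unfolding iso_iff by blast
  obtain g where g: "bij_betw g (fst B) (fst B')"
    and hom_g: "\<forall>a\<in>fst B. \<forall>b\<in>fst B. snd B a b \<longleftrightarrow> snd B' (g a) (g b)"
    using assms(2) unfolding iso_iff by blast
  have "f a = f b \<longleftrightarrow> a = b" if "a \<in> fst A" "b \<in> fst A" for a b
    using f that by (auto simp: bij_betw_def inj_on_def)
  then have "\<forall>x\<in>fst A \<times> fst B. \<forall>y\<in>fst A \<times> fst B.
      snd (lex_prod A B) x y \<longleftrightarrow> snd (lex_prod A' B') (map_prod f g x) (map_prod f g y)"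
    using hom_f hom_g by (auto simp: lex_prod_def)
  with bij_betw_map_prod[OF f g] show ?thesis
    unfolding iso_iff by (auto simp: lex_prod_def)
qed

lemma lex_prod_rev_order: "lex_prod (rev_order A) (rev_order B) = rev_order (lex_prod A B)"
  by (cases A; cases B) (auto simp: lex_prod_def rev_order_def fun_eq_iff)

lemma strict_linear_lex_prod:
  assumes "strict_linear A" and "strict_linear B"
  shows "strict_linear (lex_prod A B)"
proof -
  obtain D R E Q where A: "A = (D, R)" and B: "B = (E, Q)"
    by (cases A; cases B)
  have irr: "irreflp_on D R" "irreflp_on E Q" and tr: "transp_on D R" "transp_on E Q"
    and tot: "totalp_on D R" "totalp_on E Q"
    using assms by (simp_all add: A B strict_linear_def)
  have "irreflp_on (D \<times> E) (\<lambda>x y. R (fst x) (fst y) \<or> fst x = fst y \<and> Q (snd x) (snd y))"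
    using irr by (auto simp: irreflp_on_def)
  moreover have "transp_on (D \<times> E) (\<lambda>x y. R (fst x) (fst y) \<or> fst x = fst y \<and> Q (snd x) (snd y))"
    by (rule transp_onI) (auto dest: transp_onD[OF tr(1)] transp_onD[OF tr(2)])
  moreover have "totalp_on (D \<times> E) (\<lambda>x y. R (fst x) (fst y) \<or> fst x = fst y \<and> Q (snd x) (snd y))"
    using tot by (auto simp: totalp_on_def prod_eq_iff)
  ultimately show ?thesis
    by (simp add: A B strict_linear_def lex_prod_def)
qed

definition encode_struct :: "(nat \<times> nat) struct \<Rightarrow> nat struct" where
  "encode_struct A = (prod_encode ` fst A, \<lambda>p q. snd A (prod_decode p) (prod_decode q))"

lemma iso_encode_struct: "iso (encode_struct A) A"
  unfolding iso_iff encode_struct_def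
  by (intro exI[of _ prod_decode] conjI bij_betw_imageI) (auto simp: inj_on_def image_image)

section \<open>The orders \<open>\<omega>\<^sup>n\<close>\<close>

lemma lex_less_irrefl: "\<not> lex_less xs xs"
  by (induction xs) auto

lemma lex_less_trans: "lex_less xs ys \<Longrightarrow> lex_less ys zs \<Longrightarrow> lex_less xs zs"
proof (induction xs arbitrary: ys zs)
  case (Cons x xs)
  then obtain y ys' z zs' where "ys = y # ys'" and "zs = z # zs'"
    by (cases ys; cases zs) auto
  with Cons show ?case
    by auto
qed simp

lemma lex_less_total: "length xs = length ys \<Longrightarrow> xs \<noteq> ys \<Longrightarrow> lex_less xs ys \<or> lex_less ys xs"
proof (induction xs arbitrary: ys)
  case (Cons x xs)
  then obtain y ys' where "ys = y # ys'"
    by (cases ys) auto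
  with Cons show ?case
    by (cases "x = y") auto
qed simp

lemma lex_less_append:
  "length xs = length xs' \<Longrightarrow>
     lex_less (xs @ ys) (xs' @ ys') \<longleftrightarrow> lex_less xs xs' \<or> xs = xs' \<and> lex_less ys ys'"
proof (induction xs arbitrary: xs')
  case (Cons x xs)
  then obtain y xs'' where "xs' = y # xs''"
    by (cases xs') auto
  with Cons show ?case
    by auto
qed simp

lemma strict_linear_omega_pow: "strict_linear (omega_pow n)"
  unfolding strict_linear_def omega_pow_def irreflp_on_def transp_on_def totalp_on_def
  using lex_less_irrefl lex_less_trans lex_less_total by auto

lemma iso_lex_prod_omega_pow: "iso (lex_prod (omega_pow m) (omega_pow n)) (omega_pow (m + n))"
proof -
  let ?pairs = "{xs :: nat list. length xs = m} \<times> {ys :: nat list. length ys = n}"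
  have "bij_betw (\<lambda>(xs, ys). xs @ ys) ?pairs {zs. length zs = m + n}"
  proof (rule bij_betw_imageI)
    show "inj_on (\<lambda>(xs, ys). xs @ ys) ?pairs"
      by (auto simp: inj_on_def)
    have "zs \<in> (\<lambda>(xs, ys). xs @ ys) ` ?pairs" if "length zs = m + n" for zs
      using that by (intro image_eqI[of _ _ "(take m zs, drop m zs)"]) auto
    then show "(\<lambda>(xs, ys). xs @ ys) ` ?pairs = {zs. length zs = m + n}"
      by auto
  qed
  moreover have "\<forall>x\<in>?pairs. \<forall>y\<in>?pairs.
      snd (lex_prod (omega_pow m) (omega_pow n)) x y \<longleftrightarrow> lex_less (fst x @ snd x) (fst y @ snd y)"
    by (simp add: lex_prod_def omega_pow_def lex_less_append)
  ultimately show ?thesis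
    unfolding iso_iff
    by (intro exI[of _ "\<lambda>(xs, ys). xs @ ys"]) (simp add: lex_prod_def omega_pow_def split_def)
qed

definition has_least :: "'a struct \<Rightarrow> bool" where
  "has_least A \<longleftrightarrow> (\<exists>m\<in>fst A. \<forall>x\<in>fst A. x \<noteq> m \<longrightarrow> snd A m x)"

lemma has_least_iso:
  assumes "iso A B" and "has_least A"
  shows "has_least B"
proof -
  obtain f where f: "bij_betw f (fst A) (fst B)"
    and hom: "\<forall>a\<in>fst A. \<forall>b\<in>fst A. snd A a b \<longleftrightarrow> snd B (f a) (f b)"
    using assms(1) unfolding iso_iff by blast
  obtain m where "m \<in> fst A" and least: "\<forall>x\<in>fst A. x \<noteq> m \<longrightarrow> snd A m x"
    using assms(2) unfolding has_least_def by blast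
  have "\<forall>y\<in>fst B. y \<noteq> f m \<longrightarrow> snd B (f m) y"
    using f least hom \<open>m \<in> fst A\<close> by (auto simp: bij_betw_def)
  with \<open>m \<in> fst A\<close> f show ?thesis
    unfolding has_least_def by (auto dest: bij_betwE)
qed

lemma has_least_omega_pow: "has_least (omega_pow n)"
proof -
  have "lex_less (replicate (length xs) 0) xs" if "xs \<noteq> replicate (length xs) 0" for xs
    using that
  proof (induction xs)
    case (Cons x xs)
    then show ?case
      by (cases x) auto
  qed simp
  then show ?thesis
    unfolding has_least_def omega_pow_def by (intro bexI[of _ "replicate n 0"]) auto
qed

lemma not_has_least_rev_omega_pow: "n \<ge> 1 \<Longrightarrow> \<not> has_least (rev_order (omega_pow n))"
proof
  assume "n \<ge> 1" and "has_least (rev_order (omega_pow n))"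
  then obtain m where "length m = n" and greatest: "\<forall>x. length x = n \<and> x \<noteq> m \<longrightarrow> lex_less x m"
    unfolding has_least_def rev_order_def omega_pow_def by auto
  with \<open>n \<ge> 1\<close> obtain a t where "m = a # t"
    by (cases m) auto
  with \<open>length m = n\<close> have "lex_less (Suc a # t) (a # t)"
    using greatest[rule_format, of "Suc a # t"] by simp
  then show False
    by simp
qed

section \<open>The squaring operator\<close>

text \<open>A rule \<open>(\<alpha>, t, u)\<close> derives the pair of codes \<open>(t, u)\<close> from the premises \<open>\<alpha>\<close>; the
  parameters \<open>a, b, c, d\<close> are \<open>Param 0, \<dots>, Param 3\<close>. As premises must have distinct kinds,
  \<open>b, d \<in> D\<close> cannot be asserted by \<open>Eq b b\<close> and \<open>Eq d d\<close> together; hence the split into the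
  cases \<open>b = d\<close> and \<open>b \<noteq> d\<close>.\<close>
type_synonym pair_rule = "tsent list \<times> tterm \<times> tterm"

definition lex_less_rules :: "pair_rule list" where
  "lex_less_rules =
     [([TLess (Param 0) (Param 2), TEq (Param 1) (Param 1)], Paired 0 1, Paired 2 1),
      ([TLess (Param 0) (Param 2), TNEq (Param 1) (Param 3)], Paired 0 1, Paired 2 3),
      ([TEq (Param 0) (Param 0), TLess (Param 1) (Param 3)], Paired 0 1, Paired 0 3)]"

definition lex_greater_rules :: "pair_rule list" where
  "lex_greater_rules =
     [([TLess (Param 2) (Param 0), TEq (Param 1) (Param 1)], Paired 0 1, Paired 2 1),
      ([TLess (Param 2) (Param 0), TNEq (Param 1) (Param 3)], Paired 0 1, Paired 2 3),
      ([TEq (Param 0) (Param 0), TLess (Param 3) (Param 1)], Paired 0 1, Paired 0 3)]"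

definition diagonal_rules :: "pair_rule list" where
  "diagonal_rules =
     [([TEq (Param 0) (Param 0)], Paired 0 0, Paired 0 0),
      ([TNEq (Param 0) (Param 1)], Paired 0 1, Paired 0 1)]"

definition conclude :: "(tterm \<Rightarrow> tterm \<Rightarrow> tsent) \<Rightarrow> pair_rule \<Rightarrow> rule_template" where
  "conclude K r = (fst r, K (fst (snd r)) (snd (snd r)))"

lemma bex_map_conclude:
  "(\<exists>r\<in>set (map (conclude K) rs). P r) \<longleftrightarrow> (\<exists>(\<alpha>, t, u)\<in>set rs. P (\<alpha>, K t u))"
  by (simp add: conclude_def split_def)

definition square_operator :: "(basic set \<times> basic) set" where
  "square_operator = template_operator
     (map (conclude TLess) lex_less_rules @ map (conclude TEq) diagonal_rules @
      map (conclude TNLess) (lex_greater_rules @ diagonal_rules) @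
      map (conclude TNEq) (lex_less_rules @ lex_greater_rules))"

lemma enum_operator_square_operator: "enum_operator square_operator"
  unfolding square_operator_def
  by (rule enum_operator_template_operator)
    (simp add: lex_less_rules_def lex_greater_rules_def diagonal_rules_def conclude_def
      template_wf_def tsent_wf_def)

definition derives :: "pair_rule list \<Rightarrow> basic set \<Rightarrow> nat \<Rightarrow> nat \<Rightarrow> bool" where
  "derives rs X p q \<longleftrightarrow> (\<exists>(\<alpha>, t, u)\<in>set rs. \<exists>a b c d. inst_sent [a, b, c, d] ` set \<alpha> \<subseteq> X \<and>
     p = inst_term [a, b, c, d] t \<and> q = inst_term [a, b, c, d] u)"

lemma enum_apply_square_operator:
  shows "Less p q \<in> enum_apply square_operator X \<longleftrightarrow> derives lex_less_rules X p q"
    and "Eq p q \<in> enum_apply square_operator X \<longleftrightarrow> derives diagonal_rules X p q"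
    and "NLess p q \<in> enum_apply square_operator X \<longleftrightarrow>
      derives lex_greater_rules X p q \<or> derives diagonal_rules X p q"
    and "NEq p q \<in> enum_apply square_operator X \<longleftrightarrow>
      derives lex_less_rules X p q \<or> derives lex_greater_rules X p q"
  unfolding square_operator_def enum_apply_template_operator set_append bex_Un bex_map_conclude
  by (simp_all add: derives_def)

abbreviation square_code :: "nat struct \<Rightarrow> nat struct" where
  "square_code A \<equiv> encode_struct (lex_prod A A)"

lemma square_code_iff:
  shows "p \<in> fst (square_code A) \<longleftrightarrow> (\<exists>a\<in>fst A. \<exists>b\<in>fst A. p = prod_encode (a, b))"
    and "snd (square_code A) (prod_encode (a, b)) (prod_encode (c, d)) \<longleftrightarrow>
      snd A a c \<or> a = c \<and> snd A b d"
  by (auto simp: encode_struct_def lex_prod_def)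

lemma derives_lex_less_rules:
  "derives lex_less_rules (diag A) p q \<longleftrightarrow>
     p \<in> fst (square_code A) \<and> q \<in> fst (square_code A) \<and> snd (square_code A) p q"
proof
  assume "derives lex_less_rules (diag A) p q"
  then show "p \<in> fst (square_code A) \<and> q \<in> fst (square_code A) \<and> snd (square_code A) p q"
    unfolding derives_def lex_less_rules_def by (auto simp: diag_iff square_code_iff)
next
  assume "p \<in> fst (square_code A) \<and> q \<in> fst (square_code A) \<and> snd (square_code A) p q"
  then obtain a b c d where "a \<in> fst A" "b \<in> fst A" "c \<in> fst A" "d \<in> fst A"
    and "p = prod_encode (a, b)" "q = prod_encode (c, d)" and "snd A a c \<or> a = c \<and> snd A b d"
    by (auto simp: square_code_iff)
  then show "derives lex_less_rules (diag A) p q"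
    unfolding derives_def lex_less_rules_def by (cases "b = d") (auto simp: diag_iff)
qed

lemma derives_lex_greater_rules:
  "derives lex_greater_rules (diag A) p q \<longleftrightarrow>
     p \<in> fst (square_code A) \<and> q \<in> fst (square_code A) \<and> snd (square_code A) q p"
proof
  assume "derives lex_greater_rules (diag A) p q"
  then show "p \<in> fst (square_code A) \<and> q \<in> fst (square_code A) \<and> snd (square_code A) q p"
    unfolding derives_def lex_greater_rules_def by (auto simp: diag_iff square_code_iff)
next
  assume "p \<in> fst (square_code A) \<and> q \<in> fst (square_code A) \<and> snd (square_code A) q p"
  then obtain a b c d where "a \<in> fst A" "b \<in> fst A" "c \<in> fst A" "d \<in> fst A"
    and "p = prod_encode (a, b)" "q = prod_encode (c, d)" and "snd A c a \<or> c = a \<and> snd A d b"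
    by (auto simp: square_code_iff)
  then show "derives lex_greater_rules (diag A) p q"
    unfolding derives_def lex_greater_rules_def by (cases "b = d") (auto simp: diag_iff)
qed

lemma derives_diagonal_rules:
  "derives diagonal_rules (diag A) p q \<longleftrightarrow> p \<in> fst (square_code A) \<and> q = p"
proof
  assume "derives diagonal_rules (diag A) p q"
  then show "p \<in> fst (square_code A) \<and> q = p"
    unfolding derives_def diagonal_rules_def by (auto simp: diag_iff square_code_iff)
next
  assume "p \<in> fst (square_code A) \<and> q = p"
  then obtain a b where "a \<in> fst A" "b \<in> fst A" and "p = prod_encode (a, b)" "q = p"
    by (auto simp: square_code_iff)
  then show "derives diagonal_rules (diag A) p q"
    unfolding derives_def diagonal_rules_def by (cases "a = b") (auto simp: diag_iff)
qed

lemma enum_apply_square_operator_diag: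
  assumes "strict_linear A"
  shows "enum_apply square_operator (diag A) = diag (square_code A)"
proof -
  have "strict_linear (square_code A)"
    using strict_linear_iso[OF iso_encode_struct strict_linear_lex_prod[OF assms assms]] .
  then have "\<not> snd (square_code A) p q \<longleftrightarrow> snd (square_code A) q p \<or> p = q"
    and "p \<noteq> q \<longleftrightarrow> snd (square_code A) p q \<or> snd (square_code A) q p"
    if "p \<in> fst (square_code A)" and "q \<in> fst (square_code A)" for p q
    using that unfolding strict_linear_def irreflp_on_def transp_on_def totalp_on_def by blast+
  note lin = this
  show ?thesis
  proof (rule set_eqI)
    fix \<phi>
    show "\<phi> \<in> enum_apply square_operator (diag A) \<longleftrightarrow> \<phi> \<in> diag (square_code A)"
      using lin by (cases \<phi>) (auto simp: diag_iff enum_apply_square_operator derives_lex_less_rules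
          derives_lex_greater_rules derives_diagonal_rules)
  qed
qed

lemma iso_square_code: "iso C C' \<Longrightarrow> iso (square_code C) (square_code C')"
  by (meson iso_encode_struct iso_lex_prod iso_sym iso_trans)

lemma iso_square_code_omega_pow:
  assumes "iso C (omega_pow n)"
  shows "iso (square_code C) (omega_pow (2 * n))"
proof -
  have "iso (square_code C) (lex_prod (omega_pow n) (omega_pow n))"
    using iso_encode_struct iso_lex_prod[OF assms assms] by (rule iso_trans)
  then show ?thesis
    using iso_lex_prod_omega_pow[of n n] by (simp add: mult_2 iso_trans)
qed

lemma iso_square_code_rev_omega_pow:
  assumes "iso C (rev_order (omega_pow n))"
  shows "iso (square_code C) (rev_order (omega_pow (2 * n)))"
proof -
  have "iso (square_code C) (rev_order (lex_prod (omega_pow n) (omega_pow n)))"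
    using iso_encode_struct iso_lex_prod[OF assms assms] unfolding lex_prod_rev_order
    by (rule iso_trans)
  then show ?thesis
    using iso_rev_order[OF iso_lex_prod_omega_pow[of n n]] by (simp add: mult_2 iso_trans)
qed

lemma omega_pow_not_iso_rev: "n \<ge> 1 \<Longrightarrow> \<not> iso (omega_pow n) (rev_order (omega_pow n))"
  using has_least_iso has_least_omega_pow not_has_least_rev_omega_pow by blast

lemma comp_embedding_pair_class:
  assumes "enum_operator \<Gamma>"
    and apply_diag: "\<And>C. C \<in> pair_class A B \<Longrightarrow> enum_apply \<Gamma> (diag C) = diag (F C)"
    and F_iso: "\<And>C C'. iso C C' \<Longrightarrow> iso (F C) (F C')"
    and F_A: "\<And>C. iso C A \<Longrightarrow> iso (F C) A'"
    and F_B: "\<And>C. iso C B \<Longrightarrow> iso (F C) B'"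
    and "\<not> iso A' B'"
  shows "comp_embedding \<Gamma> (pair_class A B) (pair_class A' B')"
proof -
  have F_iso_iff: "iso (F C) (F C') \<longleftrightarrow> iso C C'"
    if "C \<in> pair_class A B" and "C' \<in> pair_class A B" for C C'
  proof
    assume FC: "iso (F C) (F C')"
    from that consider "iso C A" "iso C' A" | "iso C A" "iso C' B" | "iso C B" "iso C' A"
      | "iso C B" "iso C' B"
      unfolding pair_class_def by blast
    then show "iso C C'"
    proof cases
      case 2
      then have "iso A' B'"
        using iso_trans[OF iso_trans[OF iso_sym[OF F_A] FC] F_B] by blast
      with \<open>\<not> iso A' B'\<close> show ?thesis ..
    next
      case 3
      then have "iso A' B'"
        using iso_trans[OF iso_trans[OF iso_sym[OF F_A] iso_sym[OF FC]] F_B] by blast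
      with \<open>\<not> iso A' B'\<close> show ?thesis ..
    qed (blast intro: iso_trans iso_sym)+
  qed (rule F_iso)
  have "\<forall>C\<in>pair_class A B. \<exists>B''\<in>pair_class A' B'. enum_apply \<Gamma> (diag C) = diag B''"
    using apply_diag F_A F_B unfolding pair_class_def by blast
  moreover have "iso C C' \<longleftrightarrow> iso C'' C'''"
    if "C \<in> pair_class A B" "C' \<in> pair_class A B"
      and "enum_apply \<Gamma> (diag C) = diag C''" "enum_apply \<Gamma> (diag C') = diag C'''" for C C' C'' C'''
  proof -
    have "iso (F C) C''" and "iso (F C') C'''"
      using that apply_diag diag_eq_imp_iso by metis+
    then show ?thesis
      using F_iso_iff[OF that(1,2)] by (meson iso_sym iso_trans)
  qed
  ultimately show ?thesis
    using \<open>enum_operator \<Gamma>\<close> unfolding comp_embedding_def by blast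
qed

theorem proposition6p1:
  fixes n :: nat
  assumes "n \<ge> 1"
  shows "leq_c (pair_class (omega_pow n) (rev_order (omega_pow n)))
               (pair_class (omega_pow (2 * n)) (rev_order (omega_pow (2 * n))))"
  unfolding leq_c_def
proof (intro exI comp_embedding_pair_class)
  show "enum_operator square_operator"
    by (rule enum_operator_square_operator)
  show "enum_apply square_operator (diag C) = diag (square_code C)"
    if "C \<in> pair_class (omega_pow n) (rev_order (omega_pow n))" for C
  proof (rule enum_apply_square_operator_diag)
    from that have "iso C (omega_pow n) \<or> iso C (rev_order (omega_pow n))"
      by (simp add: pair_class_def)
    then show "strict_linear C"
      by (auto elim!: strict_linear_iso simp: strict_linear_omega_pow strict_linear_rev_order)
  qed
  show "\<not> iso (omega_pow (2 * n)) (rev_order (omega_pow (2 * n)))"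
    using assms by (intro omega_pow_not_iso_rev) simp
qed (fact iso_square_code iso_square_code_omega_pow iso_square_code_rev_omega_pow)+

end
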